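(* Let $(V,\mathrm{dist})$ be a metric space and $p_1,\dots,p_n\in V$ (not necessarily distinct). For $t\in[n]$ let $Q_t:=\sum_{i=1}^t\sum_{j=1}^t\mathrm{dist}(p_i,p_j)$, and assume $Q_n>0$. For any $t\in[n]$, if $Q_t=0$ then $$\frac1t\ \ge\ \frac{\sum_{i=1}^n\mathrm{dist}(p_t,p_i)}{Q_n}.$$ *)

theory Defs
  imports "HOL-Analysis.Analysis"
begin

end

theory Submission
  imports Defs
begin

text \<open>If the first \<open>t\<close> points vanish in \<open>Q\<^sub>t\<close>, they all coincide with \<open>p\<^sub>t\<close>, so the
  rows \<open>1, \<dots>, t\<close> of the distance matrix all equal row \<open>t\<close>. Since all entries are
  nonnegative, these \<open>t\<close> equal rows sum to at most \<open>Q\<^sub>n\<close>.\<close>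

lemma double_sum_dist_eq_0_iff:
  fixes p :: "'i \<Rightarrow> 'a::metric_space"
  assumes "finite A"
  shows "(\<Sum>i\<in>A. \<Sum>j\<in>A. dist (p i) (p j)) = 0 \<longleftrightarrow> (\<forall>i\<in>A. \<forall>j\<in>A. p i = p j)"
  using assms by (simp add: sum_nonneg_eq_0_iff sum_nonneg)

lemma card_mult_row_sum_dist_le_double_sum:
  fixes p :: "'i \<Rightarrow> 'a::metric_space"
  assumes "finite B" and "A \<subseteq> B" and "\<And>i. i \<in> A \<Longrightarrow> p i = x"
  shows "real (card A) * (\<Sum>j\<in>B. dist x (p j)) \<le> (\<Sum>i\<in>B. \<Sum>j\<in>B. dist (p i) (p j))"
proof -
  have "real (card A) * (\<Sum>j\<in>B. dist x (p j)) = (\<Sum>i\<in>A. \<Sum>j\<in>B. dist (p i) (p j))"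
    using assms(3) by simp
  also have "\<dots> \<le> (\<Sum>i\<in>B. \<Sum>j\<in>B. dist (p i) (p j))"
    using assms(1,2) by (intro sum_mono2) (auto intro: sum_nonneg)
  finally show ?thesis .
qed

theorem lemma3p6:
  fixes p :: "nat \<Rightarrow> 'a::metric_space" and n t :: nat
  assumes "(\<Sum>i=1..n. \<Sum>j=1..n. dist (p i) (p j)) > 0"
    and "t \<in> {1..n}"
    and "(\<Sum>i=1..t. \<Sum>j=1..t. dist (p i) (p j)) = 0"
  shows "1 / real t \<ge> (\<Sum>i=1..n. dist (p t) (p i)) / (\<Sum>i=1..n. \<Sum>j=1..n. dist (p i) (p j))"
proof -
  have t: "1 \<le> t" "t \<le> n" using assms(2) by auto
  have coincide: "p i = p t" if "i \<in> {1..t}" for i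
  proof -
    have "t \<in> {1..t}" using t by simp
    then show ?thesis
      using assms(3) that unfolding double_sum_dist_eq_0_iff[OF finite_atLeastAtMost] by blast
  qed
  have "real (card {1..t}) * (\<Sum>i=1..n. dist (p t) (p i))
      \<le> (\<Sum>i=1..n. \<Sum>j=1..n. dist (p i) (p j))"
    using t by (intro card_mult_row_sum_dist_le_double_sum[OF _ _ coincide]) auto
  then have "real t * (\<Sum>i=1..n. dist (p t) (p i)) \<le> (\<Sum>i=1..n. \<Sum>j=1..n. dist (p i) (p j))"
    by simp
  then show ?thesis
    using assms(1) t(1) by (simp add: divide_simps mult.commute)
qed

end
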